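(* Let $S\in\mathbb{R}^{q\times q}$ be unknown, have no eigenvalues with negative real part, and have all entries bounded by $|S_{ij}|\le\epsilon$ for a known $\epsilon>0$. Let $\mathcal{G}$ be a directed weighted graph on nodes $\mathbf{v}_0$ (leader), $\mathbf{v}_1,\dots,\mathbf{v}_N$ (followers) with nonnegative weights $a_{ij}$, containing a directed spanning tree rooted at $\mathbf{v}_0$, whose Laplacian $\mathcal{L}$ has every nonzero entry satisfying $\varepsilon_1\le|\mathcal{L}_{ij}|\le\varepsilon_2$ for constants $0<\varepsilon_1\le\varepsilon_2$. Let $H\in\mathbb{R}^{N\times N}$ be given by $H_{ii}=\sum_{j=0,\,j\neq i}^{N}a_{ij}$ and $H_{ij}=-a_{ij}$ ($i\neq j$, $i,j\ge1$). If $\mu>\dfrac{q\epsilon N(2\varepsilon_2)^{N-1}}{\varepsilon_1^{N}}$, then $(I_N\otimes S)-\mu(H\otimes I_q)$ is Hurwitz.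
   Context: The Laplacian is $\mathcal{L}=\mathcal{D}-\mathcal{A}$ with $\mathcal{A}=(a_{ij})$ ($a_{ij}>0$ iff $\mathbf{v}_i$ receives information from $\mathbf{v}_j$; the leader receives none) and $\mathcal{D}$ the diagonal in-degree matrix; $H$ is its follower block. Hurwitz means all eigenvalues have negative real part. *)

theory Defs
  imports "HOL-Analysis.Analysis"
begin

definition cmat :: "real^'n^'m \<Rightarrow> complex^'n^'m" where
  "cmat A = (\<chi> i j. complex_of_real (A $ i $ j))"

definition mat_eigenvalue :: "real^'n^'n \<Rightarrow> complex \<Rightarrow> bool" where
  "mat_eigenvalue A l \<longleftrightarrow> (\<exists>v::complex^'n. v \<noteq> 0 \<and> cmat A *v v = l *s v)"

definition hurwitz :: "real^'n^'n \<Rightarrow> bool" where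
  "hurwitz A \<longleftrightarrow> (\<forall>l. mat_eigenvalue A l \<longrightarrow> Re l < 0)"

text \<open>Kronecker product; row index (i,k) plays the role of row (i-1)*q + k.\<close>
definition kron :: "real^'b^'a \<Rightarrow> real^'d^'c \<Rightarrow> real^('b \<times> 'd)^('a \<times> 'c)" where
  "kron A B = (\<chi> r c. A $ fst r $ fst c * B $ snd r $ snd c)"

text \<open>Graph with node set \<open>'n option\<close>: \<open>None\<close> is the leader v0, \<open>Some i\<close> the followers.
  \<open>a i j > 0\<close> iff node i receives information from node j.\<close>

definition laplacian :: "('v::finite \<Rightarrow> 'v \<Rightarrow> real) \<Rightarrow> 'v \<Rightarrow> 'v \<Rightarrow> real" where
  "laplacian a i j = (if i = j then (\<Sum>k\<in>UNIV - {i}. a i k) else - a i j)"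

definition follower_matrix :: "('n::finite option \<Rightarrow> 'n option \<Rightarrow> real) \<Rightarrow> real^'n^'n" where
  "follower_matrix a = (\<chi> i j. if i = j then (\<Sum>k\<in>UNIV - {Some i}. a (Some i) k)
                                  else - a (Some i) (Some j))"

text \<open>A directed spanning tree rooted at the leader: every follower has a parent
  (an in-neighbour, i.e. an edge parent \<rightarrow> follower), and following parents from
  any follower reaches the root (so the parent graph is acyclic, i.e. a tree).\<close>
definition has_spanning_tree_from_leader :: "('n option \<Rightarrow> 'n option \<Rightarrow> real) \<Rightarrow> bool" where
  "has_spanning_tree_from_leader a \<longleftrightarrow>
     (\<exists>p :: 'n \<Rightarrow> 'n option.
        (\<forall>i. a (Some i) (p i) > 0) \<and>
        (\<forall>i. \<exists>k. ((\<lambda>x. case x of None \<Rightarrow> None | Some j \<Rightarrow> p j) ^^ k) (Some i) = None))"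

end

(*
  Weighted Gershgorin argument. If a positive vector x makes every row of the Metzler
  majorant of M negative, M_ii x_i + (SUM j ~= i. |M_ij| x_j) < 0, then every eigenvalue
  of M has negative real part: look at the coordinate of an eigenvector maximising
  |v_i| / x_i. For M = (I (x) S) - mu (H (x) I) and the weights x_(i,k) = x_i, the row
  (i,k) of the majorant is at most q eps x_i - mu (H x)_i, so it suffices to find x > 0
  with H x >= eps2 and x <= N (eps2/eps1)^N.

  Such an x is read off the depth d in the spanning tree: with r = eps2/eps1 put
  y(d) = r + r^2 + ... + r^(N-d) and x_i = y(0) - y(d_i). The parent edge of a follower
  has weight >= eps1 and y grows by the factor r along it, y(d-1) = r (1 + y(d)), which
  beats the in-degree <= eps2.
*)
theory Submission
  imports Defs
begin

lemma mat_eigenvalue_weighted_gershgorin: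
  fixes M :: "real^'n^'n" and x :: "'n \<Rightarrow> real"
  assumes x_pos: "\<And>i. 0 < x i" and "mat_eigenvalue M l"
  obtains i where "cmod (l - of_real (M$i$i)) * x i \<le> (\<Sum>j\<in>UNIV-{i}. \<bar>M$i$j\<bar> * x j)"
proof -
  obtain v :: "complex^'n" where "v \<noteq> 0" and ev: "cmat M *v v = l *s v"
    using \<open>mat_eigenvalue M l\<close> unfolding mat_eigenvalue_def by blast
  define f where "f j = cmod (v$j) / x j" for j
  have "Max (range f) \<in> range f" by (rule Max_in) auto
  then obtain i where "f i = Max (range f)" by (metis imageE)
  then have i_max: "f j \<le> f i" for j by simp
  obtain j0 where "v$j0 \<noteq> 0" using \<open>v \<noteq> 0\<close> by (metis vec_eq_iff zero_index)
  then have "0 < f j0" using x_pos[of j0] by (simp add: f_def)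
  then have "0 < f i" using i_max[of j0] by linarith
  have "(l - of_real (M$i$i)) * v$i = (\<Sum>j\<in>UNIV-{i}. of_real (M$i$j) * v$j)"
  proof -
    have "l * v$i = (\<Sum>j\<in>UNIV. of_real (M$i$j) * v$j)"
      using arg_cong[OF ev, of "\<lambda>w. w $ i"] by (simp add: matrix_vector_mult_def cmat_def)
    also have "\<dots> = of_real (M$i$i) * v$i + (\<Sum>j\<in>UNIV-{i}. of_real (M$i$j) * v$j)"
      by (rule sum.remove) auto
    finally show ?thesis by (simp add: algebra_simps)
  qed
  then have "cmod (l - of_real (M$i$i)) * cmod (v$i) = cmod (\<Sum>j\<in>UNIV-{i}. of_real (M$i$j) * v$j)"
    by (metis norm_mult)
  also have "\<dots> \<le> (\<Sum>j\<in>UNIV-{i}. \<bar>M$i$j\<bar> * cmod (v$j))"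
    by (rule order_trans[OF norm_sum]) (simp add: norm_mult)
  also have "\<dots> \<le> (\<Sum>j\<in>UNIV-{i}. \<bar>M$i$j\<bar> * (f i * x j))"
    using i_max x_pos by (intro sum_mono mult_left_mono) (auto simp: f_def divide_le_eq)
  also have "\<dots> = f i * (\<Sum>j\<in>UNIV-{i}. \<bar>M$i$j\<bar> * x j)"
    by (simp add: sum_distrib_left algebra_simps)
  finally have "f i * (cmod (l - of_real (M$i$i)) * x i) \<le> f i * (\<Sum>j\<in>UNIV-{i}. \<bar>M$i$j\<bar> * x j)"
    using x_pos[of i] by (simp add: f_def algebra_simps)
  then show ?thesis using \<open>0 < f i\<close> that by simp
qed

lemma hurwitz_if_weighted_diagonal_dominance:
  fixes M :: "real^'n^'n" and x :: "'n \<Rightarrow> real"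
  assumes x_pos: "\<And>i. 0 < x i"
    and dominant: "\<And>i. (\<Sum>j\<in>UNIV. (if j = i then M$i$i else \<bar>M$i$j\<bar>) * x j) < 0"
  shows "hurwitz M"
  unfolding hurwitz_def
proof (intro allI impI)
  fix l assume "mat_eigenvalue M l"
  with x_pos obtain i
    where disc: "cmod (l - of_real (M$i$i)) * x i \<le> (\<Sum>j\<in>UNIV-{i}. \<bar>M$i$j\<bar> * x j)"
    by (rule mat_eigenvalue_weighted_gershgorin)
  have "(\<Sum>j\<in>UNIV. (if j = i then M$i$i else \<bar>M$i$j\<bar>) * x j)
      = M$i$i * x i + (\<Sum>j\<in>UNIV-{i}. (if j = i then M$i$i else \<bar>M$i$j\<bar>) * x j)"
    by (subst sum.remove[of _ i]) auto
  also have "(\<Sum>j\<in>UNIV-{i}. (if j = i then M$i$i else \<bar>M$i$j\<bar>) * x j)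
      = (\<Sum>j\<in>UNIV-{i}. \<bar>M$i$j\<bar> * x j)"
    by (rule sum.cong) auto
  finally have "M$i$i * x i + (\<Sum>j\<in>UNIV-{i}. \<bar>M$i$j\<bar> * x j) < 0"
    using dominant[of i] by simp
  moreover have "(Re l - M$i$i) * x i \<le> cmod (l - of_real (M$i$i)) * x i"
    using x_pos[of i] complex_Re_le_cmod[of "l - of_real (M$i$i)"] by (intro mult_right_mono) auto
  ultimately have "Re l * x i < 0" using disc by (simp add: left_diff_distrib)
  then show "Re l < 0" using x_pos[of i] by (simp add: mult_less_0_iff)
qed

lemma kron_shift_row_majorant_le:
  fixes S :: "real^'q^'q" and H :: "real^'n^'n" and \<mu> :: real and x :: "'n \<Rightarrow> real"
  defines "M \<equiv> kron (mat 1 :: real^'n^'n) S - \<mu> *\<^sub>R kron H (mat 1 :: real^'q^'q)"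
  assumes "0 \<le> \<mu>" and H_offdiag: "\<And>i j. i \<noteq> j \<Longrightarrow> H$i$j \<le> 0" and x_nonneg: "\<And>j. 0 \<le> x j"
  shows "(\<Sum>z\<in>UNIV. (if z = (i,k) then M$(i,k)$(i,k) else \<bar>M$(i,k)$z\<bar>) * x (fst z))
       \<le> (\<Sum>m\<in>UNIV. \<bar>S$k$m\<bar>) * x i - \<mu> * (\<Sum>j\<in>UNIV. H$i$j * x j)"
proof -
  have entry: "M$(i,k)$(j,m) = (if j = i then S$k$m else 0) - \<mu> * (if m = k then H$i$j else 0)" for j m
    by (auto simp: M_def kron_def mat_def)
  have termwise: "(if (j,m) = (i,k) then M$(i,k)$(i,k) else \<bar>M$(i,k)$(j,m)\<bar>) * x j
      \<le> ((if j = i then \<bar>S$k$m\<bar> else 0) - \<mu> * (if m = k then H$i$j else 0)) * x j" for j m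
    using \<open>0 \<le> \<mu>\<close> H_offdiag[of i j] x_nonneg[of j]
    by (intro mult_right_mono) (auto simp: entry abs_mult mult_nonneg_nonpos)
  have "(\<Sum>z\<in>UNIV. (if z = (i,k) then M$(i,k)$(i,k) else \<bar>M$(i,k)$z\<bar>) * x (fst z))
      \<le> (\<Sum>(j,m)\<in>UNIV. ((if j = i then \<bar>S$k$m\<bar> else 0) - \<mu> * (if m = k then H$i$j else 0)) * x j)"
  proof (rule sum_mono)
    fix z :: "'n \<times> 'q"
    obtain j m where z: "z = (j, m)" by fastforce
    show "(if z = (i,k) then M$(i,k)$(i,k) else \<bar>M$(i,k)$z\<bar>) * x (fst z)
        \<le> (case z of (j,m) \<Rightarrow> ((if j = i then \<bar>S$k$m\<bar> else 0) - \<mu> * (if m = k then H$i$j else 0)) * x j)"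
      using termwise[of j m] unfolding z by simp
  qed
  also have "\<dots> = (\<Sum>j\<in>UNIV. \<Sum>m\<in>UNIV. ((if j = i then \<bar>S$k$m\<bar> else 0) - \<mu> * (if m = k then H$i$j else 0)) * x j)"
    by (simp add: sum.cartesian_product UNIV_Times_UNIV[symmetric] del: UNIV_Times_UNIV)
  also have "\<dots> = (\<Sum>m\<in>UNIV. \<bar>S$k$m\<bar>) * x i - \<mu> * (\<Sum>j\<in>UNIV. H$i$j * x j)"
  proof -
    have "(\<Sum>j\<in>UNIV. \<Sum>m\<in>UNIV. (if j = i then \<bar>S$k$m\<bar> else 0) * x j) = (\<Sum>m\<in>UNIV. \<bar>S$k$m\<bar>) * x i"
      by (simp add: if_distrib[of "\<lambda>t. t * _"] sum.swap[of _ UNIV] sum_distrib_right cong: if_cong)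
    moreover have "(\<Sum>j\<in>UNIV. \<Sum>m\<in>UNIV. (if m = k then H$i$j else 0) * x j) = (\<Sum>j\<in>UNIV. H$i$j * x j)"
      by (simp add: if_distrib[of "\<lambda>t. t * _"] cong: if_cong)
    ultimately show ?thesis
      by (simp add: left_diff_distrib sum_subtractf sum_distrib_left[symmetric] mult.assoc)
  qed
  finally show ?thesis .
qed

lemma hurwitz_kron_shift:
  fixes S :: "real^'q^'q" and H :: "real^'n^'n" and x :: "'n \<Rightarrow> real"
  assumes S_bound: "\<And>k m. \<bar>S$k$m\<bar> \<le> \<epsilon>"
    and H_offdiag: "\<And>i j. i \<noteq> j \<Longrightarrow> H$i$j \<le> 0"
    and x_pos: "\<And>i. 0 < x i"
    and Hx: "\<And>i. c \<le> (\<Sum>j\<in>UNIV. H$i$j * x j)"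
    and "0 \<le> \<mu>" and margin: "\<And>i. real CARD('q) * \<epsilon> * x i < \<mu> * c"
  shows "hurwitz (kron (mat 1 :: real^'n^'n) S - \<mu> *\<^sub>R kron H (mat 1 :: real^'q^'q))"
    (is "hurwitz ?M")
proof (rule hurwitz_if_weighted_diagonal_dominance[where x = "\<lambda>z. x (fst z)"])
  fix z :: "'n \<times> 'q"
  obtain i k where z: "z = (i, k)" by fastforce
  have "(\<Sum>z'\<in>UNIV. (if z' = (i,k) then ?M$(i,k)$(i,k) else \<bar>?M$(i,k)$z'\<bar>) * x (fst z'))
      \<le> (\<Sum>m\<in>UNIV. \<bar>S$k$m\<bar>) * x i - \<mu> * (\<Sum>j\<in>UNIV. H$i$j * x j)"
    using \<open>0 \<le> \<mu>\<close> H_offdiag x_pos by (intro kron_shift_row_majorant_le) (auto simp: less_imp_le)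
  also have "\<dots> \<le> real CARD('q) * \<epsilon> * x i - \<mu> * c"
  proof -
    have "(\<Sum>m\<in>UNIV. \<bar>S$k$m\<bar>) \<le> real CARD('q) * \<epsilon>"
      using S_bound sum_bounded_above[of UNIV "\<lambda>m. \<bar>S$k$m\<bar>" \<epsilon>] by simp
    then show ?thesis
      using x_pos[of i] Hx[of i] \<open>0 \<le> \<mu>\<close> by (intro diff_mono mult_right_mono mult_left_mono) auto
  qed
  also have "\<dots> < 0" using margin[of i] by simp
  finally show "(\<Sum>z'\<in>UNIV. (if z' = z then ?M $ z $ z else \<bar>?M $ z $ z'\<bar>) * x (fst z')) < 0"
    unfolding z .
qed (simp add: x_pos)

(* An abbreviation, so that it matches the map in has_spanning_tree_from_leader literally. *)
abbreviation lift_parent :: "('n \<Rightarrow> 'n option) \<Rightarrow> 'n option \<Rightarrow> 'n option" where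
  "lift_parent p \<equiv> (\<lambda>u. case u of None \<Rightarrow> None | Some j \<Rightarrow> p j)"

definition tree_depth :: "('n \<Rightarrow> 'n option) \<Rightarrow> 'n option \<Rightarrow> nat" where
  "tree_depth p u = (LEAST k. (lift_parent p ^^ k) u = None)"

lemma tree_depth_None [simp]: "tree_depth p None = 0"
  unfolding tree_depth_def by (rule Least_eq_0) simp

lemma tree_depth_Some:
  assumes "\<exists>k. (lift_parent p ^^ k) (Some i) = None"
  shows "tree_depth p (Some i) = Suc (tree_depth p (p i))"
proof -
  obtain k where k: "(lift_parent p ^^ k) (Some i) = None" using assms by blast
  have step: "(lift_parent p ^^ Suc m) (Some i) = (lift_parent p ^^ m) (p i)" for m
    by (simp add: funpow_Suc_right del: funpow.simps)
  have "tree_depth p (Some i) = Suc (LEAST m. (lift_parent p ^^ Suc m) (Some i) = None)"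
    unfolding tree_depth_def
    by (rule Least_Suc[where P = "\<lambda>m. (lift_parent p ^^ m) (Some i) = None", OF k]) simp
  then show ?thesis by (simp only: step tree_depth_def)
qed

lemma parent_ne_self:
  assumes "\<forall>i. \<exists>k. (lift_parent p ^^ k) (Some i) = None"
  shows "p i \<noteq> Some i"
  using tree_depth_Some[of p i] assms by auto

lemma tree_depth_levels:
  assumes reach: "\<forall>i. \<exists>k. (lift_parent p ^^ k) (Some i) = None"
    and "1 \<le> k" "k \<le> tree_depth p (Some i)"
  shows "\<exists>j. tree_depth p (Some j) = k"
proof -
  have "tree_depth p (Some i) = k + n \<Longrightarrow> \<exists>j. tree_depth p (Some j) = k" for n
  proof (induction n arbitrary: i)
    case (Suc n)
    then have "tree_depth p (p i) = k + n" using tree_depth_Some[of p i] reach by simp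
    moreover obtain i' where "p i = Some i'"
      using \<open>1 \<le> k\<close> calculation by (cases "p i") auto
    ultimately show ?case using Suc.IH by simp
  qed auto
  then show ?thesis using \<open>k \<le> tree_depth p (Some i)\<close> le_Suc_ex by blast
qed

lemma tree_depth_le_card:
  fixes p :: "'n::finite \<Rightarrow> 'n option"
  assumes "\<forall>i. \<exists>k. (lift_parent p ^^ k) (Some i) = None"
  shows "tree_depth p (Some i) \<le> CARD('n)"
proof -
  have "{1..tree_depth p (Some i)} \<subseteq> range (\<lambda>j. tree_depth p (Some j))"
    using tree_depth_levels[OF assms] by fastforce
  then have "card {1..tree_depth p (Some i)} \<le> card (range (\<lambda>j. tree_depth p (Some j)))"
    by (rule card_mono[rotated]) simp
  also have "\<dots> \<le> CARD('n)" by (rule card_image_le) simp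
  finally show ?thesis by simp
qed

definition tree_potential :: "nat \<Rightarrow> real \<Rightarrow> ('n \<Rightarrow> 'n option) \<Rightarrow> 'n option \<Rightarrow> real" where
  "tree_potential N r p u = (\<Sum>m<N - tree_depth p u. r ^ Suc m)"

lemma tree_potential_nonneg: "0 \<le> r \<Longrightarrow> 0 \<le> tree_potential N r p u"
  by (simp add: tree_potential_def sum_nonneg)

lemma tree_potential_le_root: "0 \<le> r \<Longrightarrow> tree_potential N r p u \<le> tree_potential N r p None"
  by (simp add: tree_potential_def sum_mono2)

lemma tree_potential_root_le:
  assumes "1 \<le> r"
  shows "tree_potential N r p None \<le> real N * r ^ N"
proof -
  have "(\<Sum>m<N. r ^ Suc m) \<le> (\<Sum>m<N. r ^ N)"
    using assms by (intro sum_mono power_increasing) auto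
  then show ?thesis by (simp add: tree_potential_def)
qed

lemma tree_potential_parent:
  fixes p :: "'n::finite \<Rightarrow> 'n option"
  assumes "\<forall>i. \<exists>k. (lift_parent p ^^ k) (Some i) = None"
  shows "tree_potential CARD('n) r p (p i) = r * (1 + tree_potential CARD('n) r p (Some i))"
proof -
  have "CARD('n) - tree_depth p (p i) = Suc (CARD('n) - tree_depth p (Some i))"
    using tree_depth_Some[of p i] tree_depth_le_card[OF assms, of i] assms by simp
  then show ?thesis
    by (simp add: tree_potential_def sum.lessThan_Suc_shift sum_distrib_left distrib_left
        del: sum.lessThan_Suc)
qed

lemma edge_weight_ge_of_laplacian_bounds:
  assumes "\<forall>i j. laplacian a i j \<noteq> 0 \<longrightarrow> \<epsilon>1 \<le> \<bar>laplacian a i j\<bar> \<and> \<bar>laplacian a i j\<bar> \<le> \<epsilon>2"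
    and "u \<noteq> v" "0 < a u v"
  shows "\<epsilon>1 \<le> a u v"
proof -
  have "laplacian a u v = - a u v" using \<open>u \<noteq> v\<close> by (simp add: laplacian_def)
  then show ?thesis using assms(1)[rule_format, of u v] \<open>0 < a u v\<close> by simp
qed

lemma in_degree_le_of_laplacian_bounds:
  assumes "\<forall>i j. laplacian a i j \<noteq> 0 \<longrightarrow> \<epsilon>1 \<le> \<bar>laplacian a i j\<bar> \<and> \<bar>laplacian a i j\<bar> \<le> \<epsilon>2"
    and "\<forall>i j. 0 \<le> a i j" "0 \<le> \<epsilon>2"
  shows "(\<Sum>k\<in>UNIV - {u}. a u k) \<le> \<epsilon>2"
proof -
  have "0 \<le> (\<Sum>k\<in>UNIV - {u}. a u k)" using assms(2) by (simp add: sum_nonneg)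
  then show ?thesis using assms(1)[rule_format, of u u] assms(3)
    by (cases "(\<Sum>k\<in>UNIV - {u}. a u k) = 0") (auto simp: laplacian_def)
qed

lemma sum_UNIV_minus_Some:
  fixes g :: "'n::finite option \<Rightarrow> 'a::comm_monoid_add"
  shows "(\<Sum>u\<in>UNIV - {Some i}. g u) = g None + (\<Sum>j\<in>UNIV - {i}. g (Some j))"
proof -
  have "UNIV - {Some i} = insert None (Some ` (UNIV - {i}))"
    by (auto simp: UNIV_option_conv)
  then show ?thesis by (simp add: sum.reindex)
qed

lemma follower_matrix_mult_vanishing_at_leader:
  assumes "X None = 0"
  shows "(\<Sum>j\<in>UNIV. follower_matrix a $ i $ j * X (Some j))
       = (\<Sum>u\<in>UNIV - {Some i}. a (Some i) u * (X (Some i) - X u))"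
proof -
  have "(\<Sum>u\<in>UNIV - {Some i}. a (Some i) u * (X (Some i) - X u))
      = (\<Sum>u\<in>UNIV - {Some i}. a (Some i) u) * X (Some i) - (\<Sum>u\<in>UNIV - {Some i}. a (Some i) u * X u)"
    by (simp add: right_diff_distrib sum_subtractf sum_distrib_right)
  also have "\<dots> = follower_matrix a $ i $ i * X (Some i)
      - (\<Sum>j\<in>UNIV - {i}. a (Some i) (Some j) * X (Some j))"
    using sum_UNIV_minus_Some[of "\<lambda>u. a (Some i) u * X u" i] assms by (simp add: follower_matrix_def)
  also have "\<dots> = follower_matrix a $ i $ i * X (Some i)
      + (\<Sum>j\<in>UNIV - {i}. follower_matrix a $ i $ j * X (Some j))"
    by (simp add: follower_matrix_def sum_negf)
  also have "\<dots> = (\<Sum>j\<in>UNIV. follower_matrix a $ i $ j * X (Some j))"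
    by (subst sum.remove[of _ i]) auto
  finally show ?thesis ..
qed

lemma follower_matrix_weight_vector:
  fixes a :: "'n::finite option \<Rightarrow> 'n option \<Rightarrow> real" and p :: "'n \<Rightarrow> 'n option"
  assumes a_nonneg: "\<forall>i j. 0 \<le> a i j"
    and reach: "\<forall>i. \<exists>k. (lift_parent p ^^ k) (Some i) = None"
    and parent: "\<And>i. \<epsilon>1 \<le> a (Some i) (p i)"
    and degree: "\<And>i. (\<Sum>u\<in>UNIV - {Some i}. a (Some i) u) \<le> \<epsilon>2"
    and "0 < \<epsilon>1" "\<epsilon>1 \<le> \<epsilon>2"
  obtains x :: "'n \<Rightarrow> real"
  where "\<And>i. 0 < x i" "\<And>i. x i \<le> real CARD('n) * (\<epsilon>2 / \<epsilon>1) ^ CARD('n)"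
    and "\<And>i. \<epsilon>2 \<le> (\<Sum>j\<in>UNIV. follower_matrix a $ i $ j * x j)"
proof
  define r where "r = \<epsilon>2 / \<epsilon>1"
  define y where "y = tree_potential CARD('n) r p"
  define x where "x i = y None - y (Some i)" for i
  have "1 \<le> r" "\<epsilon>1 * r = \<epsilon>2" using \<open>0 < \<epsilon>1\<close> \<open>\<epsilon>1 \<le> \<epsilon>2\<close> by (simp_all add: r_def)
  then have y_nonneg: "0 \<le> y u" and y_le_root: "y u \<le> y None" for u
    by (simp_all add: y_def tree_potential_nonneg tree_potential_le_root)
  have y_parent: "y (p i) = r * (1 + y (Some i))" for i
    unfolding y_def using reach by (rule tree_potential_parent)
  show "0 < x i" for i
  proof -
    have "y (Some i) < r * (1 + y (Some i))"
      using \<open>1 \<le> r\<close> y_nonneg[of "Some i"] by (smt (verit) mult_le_cancel_right1)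
    then show ?thesis using y_parent[of i] y_le_root[of "p i"] by (simp add: x_def)
  qed
  show "x i \<le> real CARD('n) * (\<epsilon>2 / \<epsilon>1) ^ CARD('n)" for i
  proof -
    have "y None \<le> real CARD('n) * r ^ CARD('n)"
      unfolding y_def using \<open>1 \<le> r\<close> by (rule tree_potential_root_le)
    then show ?thesis using y_nonneg[of "Some i"] unfolding x_def r_def by linarith
  qed
  show "\<epsilon>2 \<le> (\<Sum>j\<in>UNIV. follower_matrix a $ i $ j * x j)" for i
  proof -
    have "\<epsilon>2 = \<epsilon>1 * y (p i) - \<epsilon>2 * y (Some i)"
      using y_parent[of i] \<open>\<epsilon>1 * r = \<epsilon>2\<close> by (simp add: algebra_simps flip: mult.assoc)
    also have "\<dots> \<le> a (Some i) (p i) * y (p i) - (\<Sum>u\<in>UNIV - {Some i}. a (Some i) u) * y (Some i)"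
      using parent degree y_nonneg by (intro diff_mono mult_right_mono) auto
    also have "\<dots> \<le> (\<Sum>u\<in>UNIV - {Some i}. a (Some i) u * y u)
        - (\<Sum>u\<in>UNIV - {Some i}. a (Some i) u) * y (Some i)"
      using parent_ne_self[OF reach, of i] a_nonneg y_nonneg
      by (intro diff_right_mono member_le_sum[where f = "\<lambda>u. a (Some i) u * y u"]) auto
    also have "\<dots> = (\<Sum>u\<in>UNIV - {Some i}. a (Some i) u * (y u - y (Some i)))"
      by (simp add: right_diff_distrib sum_subtractf sum_distrib_right)
    also have "\<dots> = (\<Sum>j\<in>UNIV. follower_matrix a $ i $ j * x j)"
      using follower_matrix_mult_vanishing_at_leader[of "\<lambda>u. y None - y u" a i] by (simp add: x_def)
    finally show ?thesis .
  qed
qed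

lemma gain_threshold_margin:
  fixes c \<epsilon>1 \<epsilon>2 \<mu> t :: real
  assumes "0 \<le> c" "0 < \<epsilon>1" "\<epsilon>1 \<le> \<epsilon>2" "0 < n"
    and "t \<le> real n * (\<epsilon>2 / \<epsilon>1) ^ n"
    and "c * real n * (2 * \<epsilon>2) ^ (n - 1) / \<epsilon>1 ^ n < \<mu>"
  shows "c * t < \<mu> * \<epsilon>2"
proof -
  have "c * t \<le> c * (real n * (\<epsilon>2 / \<epsilon>1) ^ n)"
    using assms(5,1) by (rule mult_left_mono)
  also have "\<dots> = \<epsilon>2 * (c * real n * \<epsilon>2 ^ (n - 1) / \<epsilon>1 ^ n)"
    using \<open>0 < n\<close> by (cases n) (simp_all add: power_divide)
  also have "\<dots> \<le> \<epsilon>2 * (c * real n * (2 * \<epsilon>2) ^ (n - 1) / \<epsilon>1 ^ n)"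
    using assms(1-3) by (intro mult_left_mono divide_right_mono power_mono) auto
  also have "\<dots> < \<epsilon>2 * \<mu>"
    using assms by (intro mult_strict_left_mono) auto
  finally show ?thesis by (simp add: mult.commute)
qed

theorem proposition1:
  fixes S :: "real^'q^'q"
    and a :: "'n::finite option \<Rightarrow> 'n option \<Rightarrow> real"
    and \<epsilon> \<epsilon>1 \<epsilon>2 \<mu> :: real
  assumes S_spec: "\<forall>l. mat_eigenvalue S l \<longrightarrow> Re l \<ge> 0"
    and eps_pos: "\<epsilon> > 0"
    and S_bound: "\<forall>i j. \<bar>S $ i $ j\<bar> \<le> \<epsilon>"
    and a_nonneg: "\<forall>i j. a i j \<ge> 0"
    and leader: "\<forall>j. a None j = 0"
    and tree: "has_spanning_tree_from_leader a"
    and eps12: "0 < \<epsilon>1" "\<epsilon>1 \<le> \<epsilon>2"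
    and L_bounds: "\<forall>i j. laplacian a i j \<noteq> 0 \<longrightarrow>
                     \<epsilon>1 \<le> \<bar>laplacian a i j\<bar> \<and> \<bar>laplacian a i j\<bar> \<le> \<epsilon>2"
    and mu: "\<mu> > real CARD('q) * \<epsilon> * real CARD('n) * (2 * \<epsilon>2) ^ (CARD('n) - 1) / \<epsilon>1 ^ CARD('n)"
  shows "hurwitz (kron (mat 1 :: real^'n^'n) S - \<mu> *\<^sub>R kron (follower_matrix a) (mat 1 :: real^'q^'q))"
proof -
  obtain p where parent_pos: "\<forall>i. 0 < a (Some i) (p i)"
    and reach: "\<forall>i. \<exists>k. (lift_parent p ^^ k) (Some i) = None"
    using tree unfolding has_spanning_tree_from_leader_def by blast
  have "\<epsilon>1 \<le> a (Some i) (p i)" for i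
    using edge_weight_ge_of_laplacian_bounds[OF L_bounds _ parent_pos[rule_format, of i]]
      parent_ne_self[OF reach, of i] by metis
  moreover have "(\<Sum>u\<in>UNIV - {Some i}. a (Some i) u) \<le> \<epsilon>2" for i
    using L_bounds a_nonneg eps12 by (intro in_degree_le_of_laplacian_bounds) auto
  ultimately obtain x :: "'n \<Rightarrow> real" where x_pos: "\<And>i. 0 < x i"
    and x_le: "\<And>i. x i \<le> real CARD('n) * (\<epsilon>2 / \<epsilon>1) ^ CARD('n)"
    and Hx: "\<And>i. \<epsilon>2 \<le> (\<Sum>j\<in>UNIV. follower_matrix a $ i $ j * x j)"
    using follower_matrix_weight_vector[OF a_nonneg reach _ _ eps12] by blast
  have "0 \<le> real CARD('q) * \<epsilon> * real CARD('n) * (2 * \<epsilon>2) ^ (CARD('n) - 1) / \<epsilon>1 ^ CARD('n)"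
    using eps_pos eps12 by simp
  then have "0 \<le> \<mu>" using mu by linarith
  moreover have "real CARD('q) * \<epsilon> * x i < \<mu> * \<epsilon>2" for i
    using eps_pos eps12 x_le mu by (intro gain_threshold_margin) auto
  ultimately show ?thesis
    using S_bound a_nonneg x_pos Hx
    by (intro hurwitz_kron_shift[where c = \<epsilon>2]) (auto simp: follower_matrix_def)
qed

end
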